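(* Assume $d\ge3$. The following are equivalent: (i) $a^*_i+a^*_{i+1}=a^*_{i+1}+a^*_{i+2}$ for every integer $i$ with $0\le i\le d-3$; (ii) $a^*_i+a^*_{i+1}=a^*_{i+1}+a^*_{i+2}$ for some integer $i$ with $0\le i\le d-3$; (iii) $r-s=0$ or $r+s=0$.
   Context: Fix an integer $d\ge0$ and $r,s\in(-1,\infty)$. Write $(x)_i=x(x+1)\cdots(x+i-1)$, $(x)_0=1$. For $0\le i\le d$ put $\theta^*_i=i$. Put $b^*_i=\frac{(d-i)(i-d-s)(2d-2i+r+s+2)_i}{(2d-2i+r+s)_{i+1}}$ ($0\le i\le d-1$), $c^*_i=\frac{i(i-d-r-1)(d-i+r+s+1)_{d-i}}{(d-i+r+s+2)_{d-i+1}}$ ($1\le i\le d$), $b^*_d=c^*_0=0$, and $a^*_i=\theta^*_0-b^*_i-c^*_i$ for $0\le i\le d$. *)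

theory Defs
  imports Complex_Main
begin

definition theta_star :: "nat \<Rightarrow> real" where
  "theta_star i = real i"

definition b_star :: "nat \<Rightarrow> real \<Rightarrow> real \<Rightarrow> nat \<Rightarrow> real" where
  "b_star d r s i =
     (if i < d then
        (real d - real i) * (real i - real d - s)
          * pochhammer (2 * real d - 2 * real i + r + s + 2) i
          / pochhammer (2 * real d - 2 * real i + r + s) (i + 1)
      else 0)"

definition c_star :: "nat \<Rightarrow> real \<Rightarrow> real \<Rightarrow> nat \<Rightarrow> real" where
  "c_star d r s i =
     (if 1 \<le> i \<and> i \<le> d then
        real i * (real i - real d - r - 1)
          * pochhammer (real d - real i + r + s + 1) (d - i)
          / pochhammer (real d - real i + r + s + 2) (d - i + 1)
      else 0)"

definition a_star :: "nat \<Rightarrow> real \<Rightarrow> real \<Rightarrow> nat \<Rightarrow> real" where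
  "a_star d r s i = theta_star 0 - b_star d r s i - c_star d r s i"

end

theory Submission
  imports Defs
begin

text \<open>The Pochhammer quotients in \<open>b\<^sup>*\<^sub>i\<close> and \<open>c\<^sup>*\<^sub>i\<close> telescope to rational functions of
  \<open>D = 2d - 2i + r + s\<close>, and then \<open>a\<^sup>*\<^sub>i - a\<^sup>*\<^sub>i\<^sub>+\<^sub>2\<close> factors as
  \<open>-2(r - s)(r + s)(D - 1)(r + s + 2d + 2) / (D(D + 2)(D - 2)(D - 4))\<close>.
  For \<open>i \<le> d - 3\<close> we have \<open>D > 4\<close>, so only the factors \<open>r - s\<close> and \<open>r + s\<close> can vanish,
  and the condition \<open>a\<^sup>*\<^sub>i = a\<^sup>*\<^sub>i\<^sub>+\<^sub>2\<close> does not depend on \<open>i\<close>.\<close>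

lemma pochhammer_Suc_Suc:
  "pochhammer (x :: 'a :: comm_semiring_1) (Suc (Suc n)) = x * (x + 1) * pochhammer (x + 2) n"
  by (simp add: pochhammer_rec add.assoc one_add_one mult.assoc)

lemma pochhammer_shift2_quotient:
  fixes x :: "'a :: field"
  assumes "pochhammer x (Suc (Suc n)) \<noteq> 0"
  shows "pochhammer (x + 2) n / pochhammer x (Suc n) = (x + of_nat n + 1) / (x * (x + 1))"
proof -
  have rec: "pochhammer x (Suc (Suc n)) = pochhammer x (Suc n) * (x + of_nat n + 1)"
    by (simp add: pochhammer_rec' add.assoc)
  with assms have "pochhammer x (Suc n) \<noteq> 0" by auto
  moreover have "x * (x + 1) \<noteq> 0" using assms by (simp add: pochhammer_Suc_Suc)
  ultimately show ?thesis
    using rec by (simp add: frac_eq_eq pochhammer_Suc_Suc mult.commute)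
qed

lemma pochhammer_shift1_quotient:
  fixes y :: "'a :: field"
  assumes "pochhammer y (Suc (Suc n)) \<noteq> 0"
  shows "pochhammer y n / pochhammer (y + 1) (Suc n) = y / ((y + of_nat n) * (y + of_nat n + 1))"
proof -
  have rec: "pochhammer y (Suc (Suc n)) = y * pochhammer (y + 1) (Suc n)"
    by (simp add: pochhammer_rec)
  have rec': "pochhammer y (Suc (Suc n)) = pochhammer y n * ((y + of_nat n) * (y + of_nat n + 1))"
    by (simp add: pochhammer_rec' add.assoc mult.assoc)
  have "(y + of_nat n) * (y + of_nat n + 1) \<noteq> 0" using assms rec' by auto
  with assms rec rec' show ?thesis
    by (simp add: frac_eq_eq mult.commute)
qed

lemma b_star_closed_form:
  assumes "j < d" "r + s > -2"
  shows "b_star d r s j = (real d - real j) * (real j - real d - s) * (2 * real d - real j + r + s + 1)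
     / ((2 * real d - 2 * real j + r + s) * (2 * real d - 2 * real j + r + s + 1))"
proof -
  define x where "x = 2 * real d - 2 * real j + r + s"
  have "x > 0" using assms unfolding x_def by linarith
  then have "pochhammer x (Suc (Suc j)) > 0" by (rule pochhammer_pos)
  then have "pochhammer x (Suc (Suc j)) \<noteq> 0" by simp
  then have quotient: "pochhammer (x + 2) j / pochhammer x (Suc j) = (x + real j + 1) / (x * (x + 1))"
    by (rule pochhammer_shift2_quotient)
  have "b_star d r s j
      = (real d - real j) * (real j - real d - s) * (pochhammer (x + 2) j / pochhammer x (Suc j))"
    using assms unfolding b_star_def x_def by (simp add: add_ac)
  then show ?thesis unfolding quotient by (simp add: x_def algebra_simps)
qed

lemma c_star_closed_form:
  assumes "j < d" "r + s > -2"
  shows "c_star d r s j = real j * (real j - real d - r - 1) * (real d - real j + r + s + 1)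
     / ((2 * real d - 2 * real j + r + s + 1) * (2 * real d - 2 * real j + r + s + 2))"
proof (cases "j = 0")
  case True
  then show ?thesis by (simp add: c_star_def)
next
  case False
  define y where "y = real d - real j + r + s + 1"
  have n: "real (d - j) = real d - real j" using assms by simp
  have "y > 0" using assms unfolding y_def by linarith
  then have "pochhammer y (Suc (Suc (d - j))) > 0" by (rule pochhammer_pos)
  then have "pochhammer y (Suc (Suc (d - j))) \<noteq> 0" by simp
  then have quotient: "pochhammer y (d - j) / pochhammer (y + 1) (Suc (d - j))
      = y / ((y + real (d - j)) * (y + real (d - j) + 1))"
    by (rule pochhammer_shift1_quotient)
  have "c_star d r s j
      = real j * (real j - real d - r - 1) * (pochhammer y (d - j) / pochhammer (y + 1) (Suc (d - j)))"
    using assms False unfolding c_star_def y_def by (simp add: Suc_diff_le add_ac)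
  then show ?thesis unfolding quotient n by (simp add: y_def algebra_simps)
qed

lemma a_star_closed_form_difference_identity:
  fixes D d j r s :: real
  assumes "D > 4" and D: "D = 2 * d - 2 * j + r + s"
  shows "(- ((d - j) * (j - d - s) * (D + j + 1) / (D * (D + 1)))
            - j * (j - d - r - 1) * (D - d + j + 1) / ((D + 1) * (D + 2)))
       - (- ((d - j - 2) * (j + 2 - d - s) * (D + j - 1) / ((D - 4) * (D - 3)))
            - (j + 2) * (j + 1 - d - r) * (D - d + j - 1) / ((D - 3) * (D - 2)))
       = -2 * (r - s) * (r + s) * (D - 1) * (r + s + 2 * d + 2) / (D * (D + 2) * (D - 4) * (D - 2))"
proof -
  have s: "s = D - 2 * d + 2 * j - r" using D by simp
  have "D \<noteq> 0" "D + 1 \<noteq> 0" "D + 2 \<noteq> 0" "D - 2 \<noteq> 0" "D - 3 \<noteq> 0" "D - 4 \<noteq> 0"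
    using \<open>D > 4\<close> by auto
  then show ?thesis unfolding s
    by (simp add: divide_simps del: eq_iff_diff_eq_0) algebra
qed

lemma a_star_diff_Suc_Suc:
  assumes "i + 3 \<le> d" "r + s > -2"
  defines "D \<equiv> 2 * real d - 2 * real i + r + s"
  shows "a_star d r s i - a_star d r s (i + 2)
    = -2 * (r - s) * (r + s) * (D - 1) * (r + s + 2 * real d + 2) / (D * (D + 2) * (D - 4) * (D - 2))"
proof -
  have "D > 4" using assms unfolding D_def by linarith
  have "a_star d r s i - a_star d r s (i + 2) =
     (- ((real d - real i) * (real i - real d - s) * (D + real i + 1) / (D * (D + 1)))
        - real i * (real i - real d - r - 1) * (D - real d + real i + 1) / ((D + 1) * (D + 2)))
   - (- ((real d - real i - 2) * (real i + 2 - real d - s) * (D + real i - 1) / ((D - 4) * (D - 3)))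
        - (real i + 2) * (real i + 1 - real d - r) * (D - real d + real i - 1) / ((D - 3) * (D - 2)))"
    using assms unfolding a_star_def theta_star_def
    by (simp add: b_star_closed_form c_star_closed_form algebra_simps)
  also have "\<dots> = -2 * (r - s) * (r + s) * (D - 1) * (r + s + 2 * real d + 2)
                    / (D * (D + 2) * (D - 4) * (D - 2))"
    by (rule a_star_closed_form_difference_identity[OF \<open>D > 4\<close>]) (simp add: D_def)
  finally show ?thesis .
qed

lemma a_star_eq_Suc_Suc_iff:
  assumes "i + 3 \<le> d" "r > -1" "s > -1"
  shows "a_star d r s i = a_star d r s (i + 2) \<longleftrightarrow> r - s = 0 \<or> r + s = 0"
proof -
  define D where "D = 2 * real d - 2 * real i + r + s"
  have "D > 4" "r + s + 2 * real d + 2 > 0" using assms unfolding D_def by linarith+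
  moreover have "a_star d r s i = a_star d r s (i + 2) \<longleftrightarrow>
      -2 * (r - s) * (r + s) * (D - 1) * (r + s + 2 * real d + 2) / (D * (D + 2) * (D - 4) * (D - 2)) = 0"
    using a_star_diff_Suc_Suc[of i d r s] assms unfolding D_def by linarith
  ultimately show ?thesis by auto
qed

theorem lemma2p9:
  fixes d :: nat and r s :: real
  assumes "d \<ge> 3" and "r > -1" and "s > -1"
  shows "((\<forall>i. i \<le> d - 3 \<longrightarrow>
             a_star d r s i + a_star d r s (i + 1) = a_star d r s (i + 1) + a_star d r s (i + 2))
          \<longleftrightarrow>
          (\<exists>i. i \<le> d - 3 \<and>
             a_star d r s i + a_star d r s (i + 1) = a_star d r s (i + 1) + a_star d r s (i + 2)))
       \<and>
         ((\<exists>i. i \<le> d - 3 \<and>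
             a_star d r s i + a_star d r s (i + 1) = a_star d r s (i + 1) + a_star d r s (i + 2))
          \<longleftrightarrow> (r - s = 0 \<or> r + s = 0))"
proof -
  have "a_star d r s i + a_star d r s (i + 1) = a_star d r s (i + 1) + a_star d r s (i + 2)
      \<longleftrightarrow> r - s = 0 \<or> r + s = 0" if "i \<le> d - 3" for i
    using a_star_eq_Suc_Suc_iff[of i d r s] that assms by simp
  moreover have "0 \<le> d - 3" by simp
  ultimately show ?thesis by blast
qed

end
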